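(* Assume (A1)–(A3). Consider AMSGrad: $m_0=0$, $v_0=0$, $\hat v_0=0$, and for $t\ge1$: $m_t=\beta_{1,t}m_{t-1}+(1-\beta_{1,t})g_t$, $v_t=\beta_2v_{t-1}+(1-\beta_2)g_t^2$, $\hat v_t=\max\{\hat v_{t-1},v_t\}$ (coordinatewise), $x_{t+1}=x_t-\alpha_tm_t/\sqrt{\hat v_t}$, with $\beta_2\in[0,1)$, $\alpha_t=1/\sqrt t$, and $\beta_{1,t}\le\beta_1\in[0,1)$ with $(\beta_{1,t})$ non-increasing. Suppose there exists $c>0$ with $|(g_1)_i|\ge c$ for all $i\in[d]$ almost surely. Then there exist constants $Q_1,Q_2$ independent of $T$ such that for every $T\ge1$, $$\min_{t\in[T]}\mathbb{E}\big[\|\nabla f(x_t)\|^2\big]\le\frac{1}{\sqrt T}\big(Q_1+Q_2\log T\big).$$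
   Context: Problem: minimize $f(x)=\mathbb{E}_\xi[f(x;\xi)]$ over $x\in\mathbb{R}^d$; $g_t$ is a stochastic gradient evaluated at $x_t$. All vector operations (division, square root, squaring, max) are coordinatewise; $\|\cdot\|$ is the Euclidean norm; $[T]=\{1,\dots,T\}$. Assumptions: (A1) $f$ is differentiable, $\|\nabla f(x)-\nabla f(y)\|\le L\|x-y\|$ for all $x,y$, and $f$ attains its minimum at some $x^*$ with $f(x^* )>-\infty$. (A2) $\|\nabla f(x)\|\le H$ for all $x$ and $\|g_t\|\le H$ for all $t$ almost surely. (A3) $g_t=\nabla f(x_t)+\zeta_t$ where the noise $\zeta_t$ has zero mean conditionally on $g_1,\dots,g_{t-1}$. Expectations are over all randomness in $\{g_t\}$. *)

theory Defs
  imports "HOL-Probability.Probability"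
begin

text \<open>AMSGrad state after n steps: (x_{n+1}, m_n, v_n, vhat_n), driven by a
  sequence of gradient values gs (gs t is the stochastic gradient g_t, t \<ge> 1).
  b2 is beta_2, b1 is the sequence beta_{1,t}, x1 is the initial point.\<close>
fun amsgrad_state ::
  "real \<Rightarrow> (nat \<Rightarrow> real) \<Rightarrow> real^'d \<Rightarrow> (nat \<Rightarrow> real^'d) \<Rightarrow> nat
     \<Rightarrow> (real^'d) \<times> (real^'d) \<times> (real^'d) \<times> (real^'d)" where
  "amsgrad_state b2 b1 x1 gs 0 = (x1, 0, 0, 0)"
| "amsgrad_state b2 b1 x1 gs (Suc n) =
     (let t = Suc n;
          (x, m, v, vh) = amsgrad_state b2 b1 x1 gs n;
          m' = b1 t *\<^sub>R m + (1 - b1 t) *\<^sub>R gs t;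
          v' = b2 *\<^sub>R v + (1 - b2) *\<^sub>R (\<chi> i. (gs t $ i)^2);
          vh' = (\<chi> i. max (vh $ i) (v' $ i));
          x' = x - (1 / sqrt (real t)) *\<^sub>R (\<chi> i. m' $ i / sqrt (vh' $ i))
      in (x', m', v', vh'))"

text \<open>The iterate x_t (t \<ge> 1); it depends only on gs 1, ..., gs (t-1).\<close>
definition amsgrad_x ::
  "real \<Rightarrow> (nat \<Rightarrow> real) \<Rightarrow> real^'d \<Rightarrow> (nat \<Rightarrow> real^'d) \<Rightarrow> nat \<Rightarrow> real^'d" where
  "amsgrad_x b2 b1 x1 gs t = fst (amsgrad_state b2 b1 x1 gs (t - 1))"

definition past_sigma :: "'w measure \<Rightarrow> (nat \<Rightarrow> 'w \<Rightarrow> real^'d) \<Rightarrow> nat \<Rightarrow> 'w measure" where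
  "past_sigma M g t = sigma (space M)
     (\<Union>s\<in>{1..<t}. {g s -` A \<inter> space M | A. A \<in> sets borel})"

end

theory Submission
  imports Defs
begin

text \<open>
  Because the first stochastic gradient is bounded away from 0 and every gradient is bounded
  by H, each coordinate of vhat_t lies between ell^2 = (1 - beta2) c^2 and H^2, so the effective
  step sizes eta_t = alpha_t / sqrt vhat_t are non-increasing and comparable to alpha_t.
  The descent lemma bounds the sum of the progress terms grad f(x_t) . (eta_t m_t) by
  f(x_1) - inf f + O(log T). Unrolling the momentum, the progress p_t nearly satisfies
  p_t = beta_{1,t} p_{t-1} + (1 - beta_{1,t}) a_t with a_t = grad f(x_t) . (eta_{t-1} g_t),
  and the defects add up to O(log T) because eta_t is monotone. Since eta_{t-1} and x_t only
  depend on g_1, ..., g_{t-1}, the noise drops out in expectation and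
  E a_t \<ge> E |grad f(x_t)|^2 / (H sqrt (t - 1)). Averaging the recursion bounds
  sum_t E |grad f(x_t)|^2 / sqrt t by O(1 + log T), and the minimum is at most this sum
  divided by sum_t 1 / sqrt t \<ge> sqrt T.
\<close>

lemma lipschitz_gradient_upper_bound:
  fixes f :: "'a::real_inner \<Rightarrow> real"
  assumes grad: "\<And>x. GDERIV f x :> grad x"
    and lip: "\<And>x y. norm (grad x - grad y) \<le> L * norm (x - y)"
  shows "f (x + h) \<le> f x + grad x \<bullet> h + \<bar>L\<bar> * (norm h)\<^sup>2"
proof -
  define \<phi> where "\<phi> s = f (x + s *\<^sub>R h)" for s
  have "(\<phi> has_derivative (\<lambda>t. grad (x + s *\<^sub>R h) \<bullet> (t *\<^sub>R h))) (at s within {0..1})" for s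
  proof -
    have "((\<lambda>s. x + s *\<^sub>R h) has_derivative (\<lambda>t. t *\<^sub>R h)) (at s within {0..1})"
      by (auto intro!: derivative_eq_intros)
    moreover have "(f has_derivative (\<lambda>v. grad (x + s *\<^sub>R h) \<bullet> v)) (at (x + s *\<^sub>R h))"
      using grad by (simp add: gderiv_def inner_commute)
    ultimately show ?thesis
      unfolding \<phi>_def by (rule has_derivative_compose)
  qed
  then obtain s where s: "s \<in> {0<..<1}" and mvt: "\<phi> 1 - \<phi> 0 = grad (x + s *\<^sub>R h) \<bullet> ((1 - 0) *\<^sub>R h)"
    using mvt_simple[of 0 1 \<phi>] by force
  have "f (x + h) - f x - grad x \<bullet> h = (grad (x + s *\<^sub>R h) - grad x) \<bullet> h"
    using mvt by (simp add: \<phi>_def inner_diff_left)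
  also have "\<dots> \<le> norm (grad (x + s *\<^sub>R h) - grad x) * norm h"
    by (rule norm_cauchy_schwarz)
  also have "\<dots> \<le> (\<bar>L\<bar> * (s * norm h)) * norm h"
    using lip[of "x + s *\<^sub>R h" x] s
    by (intro mult_right_mono order_trans[OF _ mult_right_mono[of L "\<bar>L\<bar>"]]) auto
  also have "\<dots> \<le> (\<bar>L\<bar> * norm h) * norm h"
    using s by (intro mult_right_mono mult_left_mono) (auto intro: mult_left_le_one_le)
  finally show ?thesis by (simp add: power2_eq_square algebra_simps)
qed

lemma abs_inner_mult_diff_le:
  fixes a c e e' :: "real^'n"
  assumes "\<And>i. \<bar>a $ i\<bar> \<le> H" "\<And>i. \<bar>c $ i\<bar> \<le> H" "\<And>i. e' $ i \<le> e $ i"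
  shows "\<bar>a \<bullet> ((e' - e) * c)\<bar> \<le> H\<^sup>2 * (\<Sum>i\<in>UNIV. e $ i - e' $ i)"
proof -
  have "0 \<le> H" using assms(1) abs_ge_zero order_trans by blast
  have "\<bar>a \<bullet> ((e' - e) * c)\<bar> \<le> (\<Sum>i\<in>UNIV. \<bar>a $ i\<bar> * \<bar>c $ i\<bar> * (e $ i - e' $ i))"
    unfolding inner_vec_def using assms(3)
    by (auto simp: times_vec_def abs_mult intro!: order_trans[OF sum_abs] sum_mono)
  also have "\<dots> \<le> (\<Sum>i\<in>UNIV. (H * H) * (e $ i - e' $ i))"
    using assms \<open>0 \<le> H\<close> by (intro sum_mono mult_right_mono mult_mono) (auto intro: order_trans)
  finally show ?thesis by (simp add: power2_eq_square sum_distrib_left)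
qed

lemma harm_le_1_plus_ln: "n \<ge> 1 \<Longrightarrow> (harm n :: real) \<le> 1 + ln (real n)"
  using euler_mascheroni_sequence_decreasing[of 1 n] by (simp add: harm_def)

lemma sqrt_le_sum_inverse_sqrt: "sqrt (real T) \<le> (\<Sum>t=1..T. 1 / sqrt (real t))"
proof -
  have "sqrt (real T) = (\<Sum>t=1..T. 1 / sqrt (real T))"
    by (cases "T = 0") (simp_all add: real_div_sqrt)
  also have "\<dots> \<le> (\<Sum>t=1..T. 1 / sqrt (real t))"
    by (intro sum_mono) (auto simp: frac_le)
  finally show ?thesis .
qed

lemma Min_le_of_weighted_sum_le:
  fixes G :: "nat \<Rightarrow> real"
  assumes "T \<ge> 1" "\<And>t. G t \<ge> 0" "(\<Sum>t=1..T. G t / sqrt (real t)) \<le> B"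
  shows "Min (G ` {1..T}) \<le> B / sqrt (real T)"
proof -
  define \<mu> where "\<mu> = Min (G ` {1..T})"
  have "\<mu> * sqrt (real T) \<le> \<mu> * (\<Sum>t=1..T. 1 / sqrt (real t))"
    using assms(1,2) by (intro mult_left_mono sqrt_le_sum_inverse_sqrt) (auto simp: \<mu>_def Min_ge_iff)
  also have "\<dots> \<le> (\<Sum>t=1..T. G t / sqrt (real t))"
    by (auto simp: sum_distrib_left \<mu>_def intro!: sum_mono divide_right_mono)
  finally show ?thesis
    using assms(1,3) by (simp add: \<mu>_def pos_le_divide_eq)
qed

lemma sum_exponential_average_le:
  fixes Z e b :: "nat \<Rightarrow> real" and \<beta> :: real
  assumes Z_0: "Z 0 = 0" and Z_Suc: "\<And>t. Z (Suc t) = b (Suc t) * Z t + e (Suc t)"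
    and b: "\<And>t. 0 \<le> b (Suc t) \<and> b (Suc t) \<le> \<beta>" and \<beta>: "\<beta> < 1"
    and e: "\<And>t. 0 \<le> e (Suc t)"
  shows "(\<Sum>t=1..T. Z t) \<le> (\<Sum>t=1..T. e t) / (1 - \<beta>)"
proof -
  have Z_nonneg: "0 \<le> Z t" for t
    by (induction t) (use b e in \<open>simp_all add: Z_0 Z_Suc\<close>)
  have Z_sum: "(1 - \<beta>) * (\<Sum>t=1..T. Z t) + \<beta> * Z T \<le> (\<Sum>t=1..T. e t)" for T
  proof (induction T)
    case (Suc T)
    have "b (Suc T) * Z T \<le> \<beta> * Z T"
      using b Z_nonneg by (intro mult_right_mono) auto
    with Suc show ?case by (simp add: Z_Suc algebra_simps)
  qed (simp add: Z_0)
  moreover have "0 \<le> \<beta> * Z T"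
    using b[of 0] Z_nonneg[of T] by simp
  ultimately have "(1 - \<beta>) * (\<Sum>t=1..T. Z t) \<le> (\<Sum>t=1..T. e t)"
    using Z_sum[of T] by linarith
  then show ?thesis
    using \<beta> by (simp add: pos_le_divide_eq mult.commute)
qed

text \<open>p dominates the difference of the exponential averages Y of a and Z of e.\<close>
lemma sum_le_of_averaging_recursion:
  fixes p a e b :: "nat \<Rightarrow> real" and \<beta> :: real
  assumes p0: "p 0 = 0"
    and rec: "\<And>t. t \<ge> 1 \<Longrightarrow> b t * p (t - 1) + (1 - b t) * a t - e t \<le> p t"
    and b: "\<And>t. t \<ge> 1 \<Longrightarrow> 0 \<le> b t \<and> b t \<le> \<beta>" and \<beta>: "\<beta> < 1"
    and a: "\<And>t. t \<ge> 1 \<Longrightarrow> 0 \<le> a t" and e: "\<And>t. t \<ge> 1 \<Longrightarrow> 0 \<le> e t"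
  shows "(1 - \<beta>) * (\<Sum>t=1..T. a t) \<le> (\<Sum>t=1..T. p t) + (\<Sum>t=1..T. e t) / (1 - \<beta>)"
proof -
  define Y where "Y = rec_nat 0 (\<lambda>t y. b (Suc t) * y + (1 - b (Suc t)) * a (Suc t))"
  define Z where "Z = rec_nat 0 (\<lambda>t z. b (Suc t) * z + e (Suc t))"
  have Y_Suc: "Y (Suc t) = b (Suc t) * Y t + (1 - b (Suc t)) * a (Suc t)"
    and Z_Suc: "Z (Suc t) = b (Suc t) * Z t + e (Suc t)" for t
    by (simp_all add: Y_def Z_def)
  have b_Suc: "0 \<le> b (Suc t) \<and> b (Suc t) \<le> \<beta>" for t
    using b[of "Suc t"] by auto
  have Y_nonneg: "0 \<le> Y t" for t
  proof (induction t)
    case (Suc t)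
    have "0 \<le> 1 - b (Suc t)" using b_Suc[of t] \<beta> by simp
    with Suc show ?case using b_Suc[of t] a[of "Suc t"] by (simp add: Y_Suc)
  qed (simp add: Y_def)
  have p_ge: "Y t - Z t \<le> p t" for t
  proof (induction t)
    case (Suc t)
    then have "b (Suc t) * (Y t - Z t) \<le> b (Suc t) * p t"
      using b_Suc by (intro mult_left_mono) auto
    then show ?case
      using rec[of "Suc t"] by (simp add: Y_Suc Z_Suc algebra_simps)
  qed (simp add: Y_def Z_def p0)
  have Y_ge: "(1 - \<beta>) * a t \<le> Y t" if t_pos: "t \<ge> 1" for t
  proof -
    obtain s where t: "t = Suc s" using t_pos by (cases t) auto
    have "(1 - \<beta>) * a t \<le> (1 - b t) * a t"
      using b_Suc[of s] a[OF t_pos] by (intro mult_right_mono) (auto simp: t)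
    moreover have "0 \<le> b (Suc s) * Y s"
      using b_Suc[of s] Y_nonneg[of s] by simp
    ultimately show ?thesis
      by (simp add: t Y_Suc)
  qed
  have "(1 - \<beta>) * (\<Sum>t=1..T. a t) \<le> (\<Sum>t=1..T. Y t)"
    unfolding sum_distrib_left by (intro sum_mono Y_ge) auto
  also have "\<dots> \<le> (\<Sum>t=1..T. p t) + (\<Sum>t=1..T. Z t)"
    using p_ge by (simp add: sum.distrib[symmetric] sum_mono add.commute diff_le_eq)
  also have "(\<Sum>t=1..T. Z t) \<le> (\<Sum>t=1..T. e t) / (1 - \<beta>)"
    by (rule sum_exponential_average_le[where Z=Z and b=b and e=e])
      (use Z_Suc b_Suc \<beta> e in \<open>simp_all add: Z_def\<close>)
  finally show ?thesis by simp
qed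

section \<open>A single AMSGrad trajectory\<close>

definition amsgrad_m :: "real \<Rightarrow> (nat \<Rightarrow> real) \<Rightarrow> real^'d \<Rightarrow> (nat \<Rightarrow> real^'d) \<Rightarrow> nat \<Rightarrow> real^'d"
  where "amsgrad_m b2 b1 x1 gs n = fst (snd (amsgrad_state b2 b1 x1 gs n))"

definition amsgrad_v :: "real \<Rightarrow> (nat \<Rightarrow> real) \<Rightarrow> real^'d \<Rightarrow> (nat \<Rightarrow> real^'d) \<Rightarrow> nat \<Rightarrow> real^'d"
  where "amsgrad_v b2 b1 x1 gs n = fst (snd (snd (amsgrad_state b2 b1 x1 gs n)))"

definition amsgrad_vhat :: "real \<Rightarrow> (nat \<Rightarrow> real) \<Rightarrow> real^'d \<Rightarrow> (nat \<Rightarrow> real^'d) \<Rightarrow> nat \<Rightarrow> real^'d"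
  where "amsgrad_vhat b2 b1 x1 gs n = snd (snd (snd (amsgrad_state b2 b1 x1 gs n)))"

text \<open>Note that eta 0 = 0, as 1 / 0 = 0.\<close>
definition amsgrad_eta :: "real \<Rightarrow> (nat \<Rightarrow> real) \<Rightarrow> real^'d \<Rightarrow> (nat \<Rightarrow> real^'d) \<Rightarrow> nat \<Rightarrow> real^'d"
  where "amsgrad_eta b2 b1 x1 gs n =
    (\<chi> i. 1 / (sqrt (real n) * sqrt (amsgrad_vhat b2 b1 x1 gs n $ i)))"

text \<open>The decoupled progress replaces
  the momentum by the fresh gradient and uses the step size of step n - 1, which does not depend
  on gs n.\<close>
definition amsgrad_progress ::
  "real \<Rightarrow> (nat \<Rightarrow> real) \<Rightarrow> real^'d \<Rightarrow> (nat \<Rightarrow> real^'d) \<Rightarrow> (real^'d \<Rightarrow> real^'d) \<Rightarrow> nat \<Rightarrow> real"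
  where "amsgrad_progress b2 b1 x1 gs grad n =
    grad (amsgrad_x b2 b1 x1 gs n) \<bullet> (amsgrad_eta b2 b1 x1 gs n * amsgrad_m b2 b1 x1 gs n)"

definition amsgrad_decoupled_progress ::
  "real \<Rightarrow> (nat \<Rightarrow> real) \<Rightarrow> real^'d \<Rightarrow> (nat \<Rightarrow> real^'d) \<Rightarrow> (real^'d \<Rightarrow> real^'d) \<Rightarrow> nat \<Rightarrow> real"
  where "amsgrad_decoupled_progress b2 b1 x1 gs grad n =
    grad (amsgrad_x b2 b1 x1 gs n) \<bullet> (amsgrad_eta b2 b1 x1 gs (n - 1) * gs n)"

definition amsgrad_progress_defect ::
  "real \<Rightarrow> (nat \<Rightarrow> real) \<Rightarrow> real^'d \<Rightarrow> (nat \<Rightarrow> real^'d) \<Rightarrow> (real^'d \<Rightarrow> real^'d) \<Rightarrow> nat \<Rightarrow> real"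
  where "amsgrad_progress_defect b2 b1 x1 gs grad n =
    amsgrad_progress b2 b1 x1 gs grad n - b1 n * amsgrad_progress b2 b1 x1 gs grad (n - 1)
      - (1 - b1 n) * amsgrad_decoupled_progress b2 b1 x1 gs grad n"

locale amsgrad_path =
  fixes b2 :: real and b1 :: "nat \<Rightarrow> real" and x1 :: "real^'d" and gs :: "nat \<Rightarrow> real^'d"
    and f :: "real^'d \<Rightarrow> real" and grad :: "real^'d \<Rightarrow> real^'d" and H c L :: real
  assumes b2: "0 \<le> b2" "b2 < 1"
    and b1: "\<And>t. t \<ge> 1 \<Longrightarrow> 0 \<le> b1 t \<and> b1 t \<le> 1"
    and gs_bound: "\<And>t. t \<ge> 1 \<Longrightarrow> norm (gs t) \<le> H"
    and c_pos: "c > 0"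
    and gs1_lower: "\<And>i. c \<le> \<bar>gs 1 $ i\<bar>"
    and grad_bound: "\<And>x. norm (grad x) \<le> H"
    and lip: "\<And>x y. norm (grad x - grad y) \<le> L * norm (x - y)"
    and grad: "\<And>x. GDERIV f x :> grad x"
begin

abbreviation "X \<equiv> amsgrad_x b2 b1 x1 gs"
abbreviation "m \<equiv> amsgrad_m b2 b1 x1 gs"
abbreviation "v \<equiv> amsgrad_v b2 b1 x1 gs"
abbreviation "vhat \<equiv> amsgrad_vhat b2 b1 x1 gs"
abbreviation "eta \<equiv> amsgrad_eta b2 b1 x1 gs"
abbreviation "P \<equiv> amsgrad_progress b2 b1 x1 gs grad"
abbreviation "A \<equiv> amsgrad_decoupled_progress b2 b1 x1 gs grad"
abbreviation "Err \<equiv> amsgrad_progress_defect b2 b1 x1 gs grad"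
abbreviation "ell \<equiv> sqrt (1 - b2) * c"

lemma m_0: "m 0 = 0" and v_0: "v 0 = 0" and vhat_0: "vhat 0 = 0"
  by (simp_all add: amsgrad_m_def amsgrad_v_def amsgrad_vhat_def)

lemma m_Suc: "m (Suc n) = b1 (Suc n) *\<^sub>R m n + (1 - b1 (Suc n)) *\<^sub>R gs (Suc n)"
  and v_Suc: "v (Suc n) = b2 *\<^sub>R v n + (1 - b2) *\<^sub>R (\<chi> i. (gs (Suc n) $ i)\<^sup>2)"
  and vhat_Suc: "vhat (Suc n) = (\<chi> i. max (vhat n $ i) (v (Suc n) $ i))"
  by (simp_all add: amsgrad_m_def amsgrad_v_def amsgrad_vhat_def Let_def split: prod.split)

lemma X_Suc: "n \<ge> 1 \<Longrightarrow> X (Suc n) = X n - eta n * m n"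
  by (cases n) (simp_all add: amsgrad_x_def amsgrad_m_def amsgrad_vhat_def amsgrad_eta_def
      vec_eq_iff times_vec_def Let_def split: prod.split)

lemma abs_gs_nth_le: "t \<ge> 1 \<Longrightarrow> \<bar>gs t $ i\<bar> \<le> H"
  using gs_bound component_le_norm_cart order_trans by blast

lemma abs_grad_nth_le: "\<bar>grad x $ i\<bar> \<le> H"
  using grad_bound component_le_norm_cart order_trans by blast

lemma c_le_H: "c \<le> H"
  using gs1_lower abs_gs_nth_le[of 1] order_trans by blast

lemma H_pos: "H > 0"
  using c_pos c_le_H by simp

lemma ell_pos: "ell > 0"
  using b2 c_pos by simp

lemma abs_m_nth_le: "\<bar>m n $ i\<bar> \<le> H"
proof (induction n)
  case 0
  then show ?case using H_pos by (simp add: m_0)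
next
  case (Suc n)
  have "\<bar>m (Suc n) $ i\<bar> \<le> b1 (Suc n) * \<bar>m n $ i\<bar> + (1 - b1 (Suc n)) * \<bar>gs (Suc n) $ i\<bar>"
    using b1[of "Suc n"] by (simp add: m_Suc abs_mult order_trans[OF abs_triangle_ineq])
  also have "\<dots> \<le> b1 (Suc n) * H + (1 - b1 (Suc n)) * H"
    using b1[of "Suc n"] Suc abs_gs_nth_le[of "Suc n" i] by (intro add_mono mult_left_mono) auto
  finally show ?case by (simp add: algebra_simps)
qed

lemma v_nth_bounds: "0 \<le> v n $ i \<and> v n $ i \<le> H\<^sup>2"
proof (induction n)
  case 0
  then show ?case by (simp add: v_0)
next
  case (Suc n)
  have "(gs (Suc n) $ i)\<^sup>2 \<le> H\<^sup>2"
    using abs_gs_nth_le[of "Suc n" i] H_pos by (simp add: abs_le_square_iff[symmetric])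
  then have "b2 * v n $ i + (1 - b2) * (gs (Suc n) $ i)\<^sup>2 \<le> b2 * H\<^sup>2 + (1 - b2) * H\<^sup>2"
    using Suc b2 by (intro add_mono mult_left_mono) auto
  moreover have "0 \<le> b2 * v n $ i + (1 - b2) * (gs (Suc n) $ i)\<^sup>2"
    using Suc b2 by simp
  ultimately show ?case by (simp add: v_Suc algebra_simps)
qed

lemma vhat_nth_bounds: "0 \<le> vhat n $ i \<and> vhat n $ i \<le> H\<^sup>2"
  by (induction n) (use v_nth_bounds in \<open>auto simp: vhat_0 vhat_Suc\<close>)

lemma vhat_nth_Suc_ge: "vhat n $ i \<le> vhat (Suc n) $ i"
  by (simp add: vhat_Suc)

lemma vhat_nth_ge: "n \<ge> 1 \<Longrightarrow> ell\<^sup>2 \<le> vhat n $ i"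
proof (induction n rule: dec_induct)
  case base
  have "c\<^sup>2 \<le> (gs 1 $ i)\<^sup>2"
    using gs1_lower[of i] c_pos by (simp add: abs_le_square_iff[symmetric])
  then have "ell\<^sup>2 \<le> v 1 $ i"
    using b2 by (simp add: v_Suc v_0 power_mult_distrib mult_left_mono)
  then show ?case by (simp add: vhat_Suc)
next
  case (step n)
  then show ?case using vhat_nth_Suc_ge[of n i] by simp
qed

lemma ell_le_sqrt_vhat_nth: "n \<ge> 1 \<Longrightarrow> ell \<le> sqrt (vhat n $ i)"
  using vhat_nth_ge ell_pos real_le_rsqrt by blast

lemma vhat_nth_pos: "n \<ge> 1 \<Longrightarrow> 0 < vhat n $ i"
  using vhat_nth_ge[of n i] ell_pos by (meson order_less_le_trans zero_less_power)

lemma eta_nth: "eta n $ i = 1 / (sqrt (real n) * sqrt (vhat n $ i))"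
  by (simp add: amsgrad_eta_def)

lemma eta_nth_nonneg: "0 \<le> eta n $ i"
  using vhat_nth_bounds[of n i] by (simp add: eta_nth)

lemma eta_nth_le: "n \<ge> 1 \<Longrightarrow> eta n $ i \<le> 1 / (sqrt (real n) * ell)"
  unfolding eta_nth using ell_le_sqrt_vhat_nth[of n i] ell_pos vhat_nth_pos[of n i] b2 c_pos
  by (intro divide_left_mono mult_left_mono mult_pos_pos) auto

lemma eta_nth_le_inverse_ell: "eta n $ i \<le> 1 / ell"
proof (cases "n = 0")
  case False
  then have "eta n $ i \<le> 1 / (sqrt (real n) * ell)" by (simp add: eta_nth_le)
  also have "\<dots> \<le> 1 / ell"
    using False ell_pos by (simp add: field_simps)
  finally show ?thesis .
qed (use ell_pos in \<open>simp add: eta_nth\<close>)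

lemma eta_nth_ge: "n \<ge> 1 \<Longrightarrow> 1 / (sqrt (real n) * H) \<le> eta n $ i"
proof -
  assume "n \<ge> 1"
  then have "0 < sqrt (vhat n $ i)"
    by (simp add: vhat_nth_pos)
  moreover have "sqrt (vhat n $ i) \<le> H"
    using vhat_nth_bounds[of n i] H_pos real_sqrt_le_mono[of "vhat n $ i" "H\<^sup>2"] by simp
  ultimately show ?thesis
    using \<open>n \<ge> 1\<close> H_pos unfolding eta_nth
    by (intro divide_left_mono mult_left_mono mult_pos_pos) auto
qed

lemma eta_nth_Suc_le: "n \<ge> 1 \<Longrightarrow> eta (Suc n) $ i \<le> eta n $ i"
  unfolding eta_nth
proof (rule frac_le)
  assume "n \<ge> 1"
  then show "0 < sqrt (real n) * sqrt (vhat n $ i)"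
    by (simp add: vhat_nth_pos)
qed (use vhat_nth_bounds in \<open>auto intro!: mult_mono real_sqrt_le_mono simp: vhat_nth_Suc_ge\<close>)

lemma norm_eta_mult_le:
  "norm (eta n * w) \<le> real CARD('d) * H / (sqrt (real n) * ell)" if "\<And>i. \<bar>w $ i\<bar> \<le> H"
proof -
  have "norm (eta n * w) \<le> (\<Sum>i\<in>UNIV. \<bar>(eta n * w) $ i\<bar>)"
    by (rule norm_le_l1_cart)
  also have "\<dots> \<le> (\<Sum>i\<in>(UNIV::'d set). 1 / (sqrt (real n) * ell) * H)"
  proof (rule sum_mono)
    fix i
    show "\<bar>(eta n * w) $ i\<bar> \<le> 1 / (sqrt (real n) * ell) * H"
    proof (cases "n = 0")
      case False
      have "eta n $ i * \<bar>w $ i\<bar> \<le> 1 / (sqrt (real n) * ell) * H"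
        using False eta_nth_le[of n i] eta_nth_nonneg[of n i] that[of i] ell_pos
        by (intro mult_mono) auto
      then show ?thesis
        using eta_nth_nonneg[of n i] ell_pos by (simp add: times_vec_def abs_mult)
    qed (simp add: eta_nth times_vec_def)
  qed
  finally show ?thesis by simp
qed

lemma progress_0: "P 0 = 0"
  by (simp add: amsgrad_progress_def amsgrad_eta_def times_vec_def inner_vec_def)

lemma decoupled_progress_1: "A 1 = 0"
  by (simp add: amsgrad_decoupled_progress_def amsgrad_eta_def times_vec_def inner_vec_def)

lemma descent_step:
  "n \<ge> 1 \<Longrightarrow> f (X (Suc n)) \<le> f (X n) - P n + \<bar>L\<bar> * (real CARD('d) * H / ell)\<^sup>2 / real n"
proof -
  assume n: "n \<ge> 1"
  have "f (X (Suc n)) \<le> f (X n) + grad (X n) \<bullet> (- (eta n * m n)) + \<bar>L\<bar> * (norm (eta n * m n))\<^sup>2"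
    using lipschitz_gradient_upper_bound[OF grad lip, of "X n" "- (eta n * m n)"] X_Suc[OF n] by simp
  also have "(norm (eta n * m n))\<^sup>2 \<le> (real CARD('d) * H / (sqrt (real n) * ell))\<^sup>2"
    using abs_m_nth_le by (intro power_mono norm_eta_mult_le) auto
  also have "(real CARD('d) * H / (sqrt (real n) * ell))\<^sup>2 = (real CARD('d) * H / ell)\<^sup>2 / real n"
    by (simp add: power_divide power_mult_distrib)
  finally show ?thesis by (simp add: amsgrad_progress_def mult_left_mono)
qed

lemma sum_progress_le:
  "(\<Sum>n=1..T. P n) \<le> f x1 - f (X (Suc T)) + \<bar>L\<bar> * (real CARD('d) * H / ell)\<^sup>2 * harm T"
proof (induction T)
  case 0
  then show ?case by (simp add: amsgrad_x_def harm_def)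
next
  case (Suc T)
  then show ?case
    using descent_step[of "Suc T"] by (simp add: harm_Suc algebra_simps divide_inverse)
qed

lemma abs_inner_eta_mult_le:
  assumes "\<And>i. \<bar>a $ i\<bar> \<le> H" "\<And>i. \<bar>w $ i\<bar> \<le> H"
  shows "\<bar>a \<bullet> (eta n * w)\<bar> \<le> real CARD('d) * H\<^sup>2 / ell"
proof -
  have "\<bar>a \<bullet> (eta n * w)\<bar> \<le> (\<Sum>i\<in>UNIV. \<bar>a $ i\<bar> * eta n $ i * \<bar>w $ i\<bar>)"
    unfolding inner_vec_def using eta_nth_nonneg
    by (auto simp: times_vec_def abs_mult intro!: order_trans[OF sum_abs] sum_mono)
  also have "\<dots> \<le> (\<Sum>i\<in>(UNIV::'d set). H * (1 / ell) * H)"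
    using assms eta_nth_le_inverse_ell eta_nth_nonneg H_pos ell_pos
    by (intro sum_mono mult_mono) (auto intro: mult_nonneg_nonneg)
  finally show ?thesis by (simp add: power2_eq_square)
qed

lemma norm_sq_div_le_inner_eta_mult: "(norm w)\<^sup>2 / (sqrt (real n) * H) \<le> w \<bullet> (eta n * w)"
proof (cases "n = 0")
  case False
  have "(norm w)\<^sup>2 = (\<Sum>i\<in>UNIV. (w $ i)\<^sup>2)"
    unfolding power2_norm_eq_inner inner_vec_def by (simp add: power2_eq_square)
  then have "(norm w)\<^sup>2 / (sqrt (real n) * H) = (\<Sum>i\<in>UNIV. 1 / (sqrt (real n) * H) * (w $ i)\<^sup>2)"
    by (simp add: sum_divide_distrib)
  also have "\<dots> \<le> (\<Sum>i\<in>UNIV. eta n $ i * (w $ i)\<^sup>2)"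
    using False eta_nth_ge by (intro sum_mono mult_right_mono) auto
  finally show ?thesis by (simp add: inner_vec_def times_vec_def power2_eq_square ac_simps)
qed (simp add: amsgrad_eta_def times_vec_def inner_vec_def)

lemma defect_Suc:
  "Err (Suc j) = b1 (Suc j) * ((grad (X (Suc j)) - grad (X j)) \<bullet> (eta (Suc j) * m j)
       + grad (X j) \<bullet> ((eta (Suc j) - eta j) * m j))
     + (1 - b1 (Suc j)) * (grad (X (Suc j)) \<bullet> ((eta (Suc j) - eta j) * gs (Suc j)))"
  by (simp add: amsgrad_progress_defect_def amsgrad_progress_def amsgrad_decoupled_progress_def
      m_Suc inner_vec_def times_vec_def algebra_simps sum.distrib sum_subtractf sum_distrib_left)

lemma abs_inner_grad_diff_le:
  assumes "j \<ge> 1"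
  shows "\<bar>(grad (X (Suc j)) - grad (X j)) \<bullet> (eta (Suc j) * m j)\<bar>
    \<le> \<bar>L\<bar> * (real CARD('d) * H / ell)\<^sup>2 / real j"
proof -
  define B where "B = real CARD('d) * H / ell"
  have B: "B \<ge> 0" using H_pos ell_pos by (simp add: B_def)
  have step: "norm (eta k * m j) \<le> B / sqrt (real k)" for k
    unfolding B_def using norm_eta_mult_le[of "m j" k] abs_m_nth_le by (simp add: field_simps)
  have "\<bar>(grad (X (Suc j)) - grad (X j)) \<bullet> (eta (Suc j) * m j)\<bar>
      \<le> norm (grad (X (Suc j)) - grad (X j)) * norm (eta (Suc j) * m j)"
    by (rule Cauchy_Schwarz_ineq2)
  also have "\<dots> \<le> (\<bar>L\<bar> * (B / sqrt (real j))) * (B / sqrt (real (Suc j)))"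
  proof (intro mult_mono step)
    have "norm (grad (X (Suc j)) - grad (X j)) \<le> \<bar>L\<bar> * norm (X (Suc j) - X j)"
      using lip by (rule order_trans) (simp add: mult_right_mono)
    also have "\<dots> \<le> \<bar>L\<bar> * (B / sqrt (real j))"
      using X_Suc[OF assms] step[of j] by (intro mult_left_mono) auto
    finally show "norm (grad (X (Suc j)) - grad (X j)) \<le> \<bar>L\<bar> * (B / sqrt (real j))" .
  qed (use B in auto)
  also have "\<dots> \<le> \<bar>L\<bar> * B\<^sup>2 / real j"
  proof -
    have "sqrt (real j) * sqrt (real j) \<le> sqrt (real j) * sqrt (real (Suc j))"
      by (intro mult_left_mono) auto
    then have "real j \<le> sqrt (real j) * sqrt (real (Suc j))"
      by simp
    then show ?thesis
      using assms B by (simp add: power2_eq_square field_simps mult_left_mono)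
  qed
  finally show ?thesis by (simp add: B_def)
qed

lemma abs_defect_Suc_le:
  assumes "j \<ge> 1"
  shows "\<bar>Err (Suc j)\<bar> \<le> \<bar>L\<bar> * (real CARD('d) * H / ell)\<^sup>2 / real j
    + H\<^sup>2 * (\<Sum>i\<in>UNIV. eta j $ i - eta (Suc j) $ i)"
proof -
  define b where "b = b1 (Suc j)"
  define \<alpha> where "\<alpha> = \<bar>L\<bar> * (real CARD('d) * H / ell)\<^sup>2 / real j"
  define \<beta> where "\<beta> = H\<^sup>2 * (\<Sum>i\<in>UNIV. eta j $ i - eta (Suc j) $ i)"
  have b: "0 \<le> b" "b \<le> 1" using b1[of "Suc j"] by (auto simp: b_def)
  have mono: "eta (Suc j) $ i \<le> eta j $ i" for i using eta_nth_Suc_le[OF assms] .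
  have "\<bar>grad (X j) \<bullet> ((eta (Suc j) - eta j) * m j)\<bar> \<le> \<beta>"
    unfolding \<beta>_def using abs_grad_nth_le abs_m_nth_le mono
    by (intro abs_inner_mult_diff_le) auto
  then have "\<bar>(grad (X (Suc j)) - grad (X j)) \<bullet> (eta (Suc j) * m j)
       + grad (X j) \<bullet> ((eta (Suc j) - eta j) * m j)\<bar> \<le> \<alpha> + \<beta>"
    unfolding \<alpha>_def using abs_inner_grad_diff_le[OF assms] by linarith
  moreover have "\<bar>grad (X (Suc j)) \<bullet> ((eta (Suc j) - eta j) * gs (Suc j))\<bar> \<le> \<beta>"
    unfolding \<beta>_def using abs_grad_nth_le abs_gs_nth_le mono
    by (intro abs_inner_mult_diff_le) auto
  moreover have "0 \<le> \<alpha>" by (simp add: \<alpha>_def)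
  ultimately have "\<bar>Err (Suc j)\<bar> \<le> b * (\<alpha> + \<beta>) + (1 - b) * \<beta>"
    unfolding defect_Suc b_def[symmetric] using b
    by (intro order_trans[OF abs_triangle_ineq] add_mono) (auto simp: abs_mult intro: mult_left_mono)
  also have "\<dots> \<le> \<alpha> + \<beta>"
    using b \<open>0 \<le> \<alpha>\<close> by (simp add: algebra_simps mult_right_le_one_le)
  finally show ?thesis by (simp add: \<alpha>_def \<beta>_def)
qed

lemma sum_abs_defect_le:
  assumes "T \<ge> 1"
  shows "(\<Sum>n=1..T. \<bar>Err n\<bar>)
    \<le> 2 * real CARD('d) * H\<^sup>2 / ell + \<bar>L\<bar> * (real CARD('d) * H / ell)\<^sup>2 * harm T"
proof -
  define C where "C = \<bar>L\<bar> * (real CARD('d) * H / ell)\<^sup>2"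
  have telescoped: "(\<Sum>n=1..T. \<bar>Err n\<bar>)
      \<le> real CARD('d) * H\<^sup>2 / ell + C * harm (T - 1) + H\<^sup>2 * (\<Sum>i\<in>UNIV. eta 1 $ i - eta T $ i)"
    using assms
  proof (induction T rule: dec_induct)
    case base
    have "Err 1 = P 1" using decoupled_progress_1 by (simp add: amsgrad_progress_defect_def progress_0)
    then show ?case
      using abs_inner_eta_mult_le[of "grad (X 1)" "m 1" 1] abs_grad_nth_le abs_m_nth_le
      by (simp add: amsgrad_progress_def harm_def)
  next
    case (step T)
    have "harm (Suc T - 1) = harm (T - 1) + 1 / real T"
      using step(1) harm_Suc[of "T - 1"] by (simp add: divide_inverse)
    then show ?case
      using step abs_defect_Suc_le[of T] by (simp add: C_def algebra_simps sum_subtractf)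
  qed
  have "harm (T - 1) \<le> (harm T :: real)"
    using assms by (cases T) (simp_all add: harm_Suc)
  moreover have "(\<Sum>i\<in>UNIV. eta 1 $ i - eta T $ i) \<le> (\<Sum>i\<in>(UNIV::'d set). 1 / ell)"
    using eta_nth_le_inverse_ell eta_nth_nonneg by (intro sum_mono) (smt (verit))
  ultimately have "(\<Sum>n=1..T. \<bar>Err n\<bar>) \<le> real CARD('d) * H\<^sup>2 / ell + C * harm T + H\<^sup>2 * (real CARD('d) / ell)"
    using telescoped by (intro order_trans[OF telescoped] add_mono mult_left_mono) (auto simp: C_def)
  then show ?thesis by (simp add: C_def field_simps)
qed

end

section \<open>Measurability and conditional expectation\<close>

lemma borel_measurable_vec_lambda [measurable (raw)]:
  fixes h :: "'a \<Rightarrow> 'n::finite \<Rightarrow> real"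
  assumes "\<And>i. (\<lambda>x. h x i) \<in> borel_measurable M"
  shows "(\<lambda>x. \<chi> i. h x i) \<in> borel_measurable M"
proof (rule iffD2[OF borel_measurable_euclidean_space], intro ballI)
  fix b :: "real^'n"
  assume "b \<in> Basis"
  then obtain i where "b = axis i 1" by (auto simp: Basis_vec_def)
  then show "(\<lambda>x. (\<chi> i. h x i) \<bullet> b) \<in> borel_measurable M"
    using assms[of i] by (simp add: inner_axis)
qed

lemma borel_measurable_vec_nth [measurable (raw)]:
  "f \<in> borel_measurable M \<Longrightarrow> (\<lambda>x. (f x :: real^'n) $ i) \<in> borel_measurable M"
  using measurable_compose[OF _ borel_measurable_nth] .

lemma measurable_amsgrad_state:
  fixes G :: "nat \<Rightarrow> 'w \<Rightarrow> real^'d"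
  assumes "\<And>s. 1 \<le> s \<Longrightarrow> s \<le> n \<Longrightarrow> G s \<in> borel_measurable N"
  shows "(\<lambda>\<omega>. fst (amsgrad_state b2 b1 x1 (\<lambda>s. G s \<omega>) n)) \<in> borel_measurable N
    \<and> (\<lambda>\<omega>. fst (snd (amsgrad_state b2 b1 x1 (\<lambda>s. G s \<omega>) n))) \<in> borel_measurable N
    \<and> (\<lambda>\<omega>. fst (snd (snd (amsgrad_state b2 b1 x1 (\<lambda>s. G s \<omega>) n)))) \<in> borel_measurable N
    \<and> (\<lambda>\<omega>. snd (snd (snd (amsgrad_state b2 b1 x1 (\<lambda>s. G s \<omega>) n)))) \<in> borel_measurable N"
  using assms
proof (induction n)
  case (Suc n)
  define x m v vh where
    "x \<omega> = fst (amsgrad_state b2 b1 x1 (\<lambda>s. G s \<omega>) n)" and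
    "m \<omega> = fst (snd (amsgrad_state b2 b1 x1 (\<lambda>s. G s \<omega>) n))" and
    "v \<omega> = fst (snd (snd (amsgrad_state b2 b1 x1 (\<lambda>s. G s \<omega>) n)))" and
    "vh \<omega> = snd (snd (snd (amsgrad_state b2 b1 x1 (\<lambda>s. G s \<omega>) n)))" for \<omega>
  have [measurable]: "x \<in> borel_measurable N" "m \<in> borel_measurable N" "v \<in> borel_measurable N"
    "vh \<in> borel_measurable N" "G (Suc n) \<in> borel_measurable N"
    using Suc by (auto simp: x_def[abs_def] m_def[abs_def] v_def[abs_def] vh_def[abs_def])
  show ?case
    by (simp add: Let_def split_beta x_def[symmetric] m_def[symmetric] v_def[symmetric]
        vh_def[symmetric])
qed simp

lemma
  assumes "\<And>s. g s \<in> borel_measurable M"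
  shows space_past_sigma: "space (past_sigma M g t) = space M"
    and sets_past_sigma: "sets (past_sigma M g t)
      = sigma_sets (space M) (\<Union>s\<in>{1..<t}. {g s -` A \<inter> space M | A. A \<in> sets borel})"
proof -
  have "(\<Union>s\<in>{1..<t}. {g s -` A \<inter> space M | A. A \<in> sets borel}) \<subseteq> Pow (space M)"
    by auto
  then show "space (past_sigma M g t) = space M"
    and "sets (past_sigma M g t) = sigma_sets (space M) (\<Union>s\<in>{1..<t}. {g s -` A \<inter> space M | A. A \<in> sets borel})"
    unfolding past_sigma_def by simp_all
qed

lemma subalgebra_past_sigma:
  assumes "\<And>s. g s \<in> borel_measurable M"
  shows "subalgebra M (past_sigma M g t)"
  unfolding subalgebra_def space_past_sigma[OF assms] sets_past_sigma[OF assms]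
  using assms by (auto intro!: sets.sigma_sets_subset measurable_sets)

lemma measurable_past_sigma:
  fixes g :: "nat \<Rightarrow> 'w \<Rightarrow> real^'d"
  assumes "\<And>s. g s \<in> borel_measurable M" "1 \<le> s" "s < t"
  shows "g s \<in> borel_measurable (past_sigma M g t)"
proof (rule measurableI)
  fix A :: "(real^'d) set"
  assume "A \<in> sets borel"
  then have "g s -` A \<inter> space M \<in> (\<Union>s\<in>{1..<t}. {g s -` A \<inter> space M | A. A \<in> sets borel})"
    using assms(2,3) by (intro UN_I[of s]) auto
  then show "g s -` A \<inter> space (past_sigma M g t) \<in> sets (past_sigma M g t)"
    unfolding space_past_sigma[OF assms(1)] sets_past_sigma[OF assms(1)] by auto
qed simp

lemma (in sigma_finite_subalgebra) integral_mult_eq_0_if_real_cond_exp_eq_0: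
  assumes "integrable M (\<lambda>x. w x * z x)" "w \<in> borel_measurable F" "z \<in> borel_measurable M"
    and "AE x in M. real_cond_exp M F z x = 0"
  shows "(\<integral>x. w x * z x \<partial>M) = 0"
proof -
  have "(\<integral>x. w x * z x \<partial>M) = (\<integral>x. w x * real_cond_exp M F z x \<partial>M)"
    using real_cond_exp_intg(2)[OF assms(1-3)] by simp
  also have "\<dots> = (\<integral>x. 0 \<partial>M)"
    using assms(4) borel_measurable_integrable[OF real_cond_exp_intg(1)[OF assms(1-3)]]
    by (intro integral_cong_AE) auto
  finally show ?thesis by simp
qed

section \<open>The stochastic setting\<close>

locale amsgrad_stochastic = prob_space M
  for M :: "'w measure"
    and f :: "real^'d \<Rightarrow> real" and grad :: "real^'d \<Rightarrow> real^'d"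
    and g zeta :: "nat \<Rightarrow> 'w \<Rightarrow> real^'d"
    and L H c beta1 beta2 :: real and b1 :: "nat \<Rightarrow> real" and x1 :: "real^'d" +
  assumes grad: "\<And>x. GDERIV f x :> grad x"
    and lip: "\<And>x y. norm (grad x - grad y) \<le> L * norm (x - y)"
    and minimum: "\<exists>xs. \<forall>x. f xs \<le> f x"
    and grad_bound: "\<And>x. norm (grad x) \<le> H"
    and g_meas: "\<And>t. g t \<in> borel_measurable M"
    and g_bound: "\<And>t. t \<ge> 1 \<Longrightarrow> AE \<omega> in M. norm (g t \<omega>) \<le> H"
    and noise: "\<And>t \<omega>. t \<ge> 1 \<Longrightarrow> \<omega> \<in> space M \<Longrightarrow>
        g t \<omega> = grad (amsgrad_x beta2 b1 x1 (\<lambda>s. g s \<omega>) t) + zeta t \<omega>"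
    and noise_mean: "\<And>t i. t \<ge> 1 \<Longrightarrow>
        AE \<omega> in M. real_cond_exp M (past_sigma M g t) (\<lambda>\<omega>. zeta t \<omega> $ i) \<omega> = 0"
    and beta2: "0 \<le> beta2" "beta2 < 1"
    and beta1: "beta1 < 1"
    and b1_range: "\<And>t. t \<ge> 1 \<Longrightarrow> 0 \<le> b1 t \<and> b1 t \<le> beta1"
    and c_pos: "c > 0"
    and g1_lower: "AE \<omega> in M. \<forall>i. \<bar>g 1 \<omega> $ i\<bar> \<ge> c"
begin

abbreviation "X t \<omega> \<equiv> amsgrad_x beta2 b1 x1 (\<lambda>s. g s \<omega>) t"
abbreviation "eta t \<omega> \<equiv> amsgrad_eta beta2 b1 x1 (\<lambda>s. g s \<omega>) t"
abbreviation "P t \<omega> \<equiv> amsgrad_progress beta2 b1 x1 (\<lambda>s. g s \<omega>) grad t"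
abbreviation "A t \<omega> \<equiv> amsgrad_decoupled_progress beta2 b1 x1 (\<lambda>s. g s \<omega>) grad t"
abbreviation "Err t \<omega> \<equiv> amsgrad_progress_defect beta2 b1 x1 (\<lambda>s. g s \<omega>) grad t"
abbreviation "ell \<equiv> sqrt (1 - beta2) * c"

lemma path_AE: "AE \<omega> in M. amsgrad_path beta2 b1 (\<lambda>s. g s \<omega>) f grad H c L"
proof -
  have "AE \<omega> in M. \<forall>t. t \<ge> 1 \<longrightarrow> norm (g t \<omega>) \<le> H"
    using g_bound by (auto simp: AE_all_countable intro: AE_impI)
  with g1_lower show ?thesis
  proof eventually_elim
    case (elim \<omega>)
    then show ?case
      using beta2 beta1 b1_range c_pos grad_bound lip grad
      by unfold_locales (auto simp: less_imp_le[OF order.strict_trans1[OF _ beta1]])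
  qed
qed

lemma H_pos: "H > 0"
proof -
  have "AE \<omega> in M. H > 0"
    using path_AE by eventually_elim (rule amsgrad_path.H_pos)
  then show ?thesis by simp
qed

lemma borel_measurable_grad [measurable]: "grad \<in> borel_measurable borel"
proof -
  have "(max L 0)-lipschitz_on UNIV grad"
    unfolding lipschitz_on_def dist_norm
    using lip by (auto intro: order_trans[OF _ mult_right_mono[of L "max L 0"]])
  then show ?thesis
    by (intro borel_measurable_continuous_onI lipschitz_on_continuous_on)
qed

declare g_meas [measurable]

lemma measurable_state_M [measurable]:
  "(\<lambda>\<omega>. fst (amsgrad_state beta2 b1 x1 (\<lambda>s. g s \<omega>) n)) \<in> borel_measurable M"
  "(\<lambda>\<omega>. fst (snd (amsgrad_state beta2 b1 x1 (\<lambda>s. g s \<omega>) n))) \<in> borel_measurable M"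
  "(\<lambda>\<omega>. snd (snd (snd (amsgrad_state beta2 b1 x1 (\<lambda>s. g s \<omega>) n)))) \<in> borel_measurable M"
  using measurable_amsgrad_state[of n g M] g_meas by auto

lemma measurable_past_sigma_weight:
  "(\<lambda>\<omega>. grad (X t \<omega>) $ i * eta (t - 1) \<omega> $ i) \<in> borel_measurable (past_sigma M g t)"
proof -
  have [measurable]:
    "(\<lambda>\<omega>. fst (amsgrad_state beta2 b1 x1 (\<lambda>s. g s \<omega>) (t - 1))) \<in> borel_measurable (past_sigma M g t)"
    "(\<lambda>\<omega>. snd (snd (snd (amsgrad_state beta2 b1 x1 (\<lambda>s. g s \<omega>) (t - 1)))))
      \<in> borel_measurable (past_sigma M g t)"
    using measurable_amsgrad_state[of "t - 1" g "past_sigma M g t"] measurable_past_sigma[OF g_meas]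
    by auto
  show ?thesis
    unfolding amsgrad_x_def amsgrad_eta_def amsgrad_vhat_def by measurable
qed

lemma borel_measurable_X [measurable]: "X t \<in> borel_measurable M"
  and borel_measurable_eta [measurable]: "eta t \<in> borel_measurable M"
  unfolding amsgrad_x_def amsgrad_eta_def amsgrad_vhat_def by measurable

lemma borel_measurable_zeta_nth [measurable]:
  assumes "t \<ge> 1"
  shows "(\<lambda>\<omega>. zeta t \<omega> $ i) \<in> borel_measurable M"
proof -
  have "(\<lambda>\<omega>. g t \<omega> $ i - grad (X t \<omega>) $ i) \<in> borel_measurable M"
    by measurable
  moreover have "(\<lambda>\<omega>. zeta t \<omega> $ i) \<in> borel_measurable M
      \<longleftrightarrow> (\<lambda>\<omega>. g t \<omega> $ i - grad (X t \<omega>) $ i) \<in> borel_measurable M"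
    by (rule measurable_cong) (simp add: noise[OF assms])
  ultimately show ?thesis by simp
qed

lemma borel_measurable_progress [measurable]: "P t \<in> borel_measurable M"
  and borel_measurable_decoupled_progress [measurable]: "A t \<in> borel_measurable M"
  and borel_measurable_defect [measurable]: "Err t \<in> borel_measurable M"
  and borel_measurable_grad_sq [measurable]: "(\<lambda>\<omega>. (norm (grad (X t \<omega>)))\<^sup>2) \<in> borel_measurable M"
  unfolding amsgrad_progress_defect_def amsgrad_progress_def amsgrad_decoupled_progress_def
    amsgrad_eta_def amsgrad_m_def amsgrad_vhat_def amsgrad_x_def times_vec_def
  by measurable

lemma integrable_progress: "integrable M (P t)"
proof (rule integrable_const_bound)
  show "AE \<omega> in M. norm (P t \<omega>) \<le> real CARD('d) * H\<^sup>2 / ell"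
    using path_AE
    by eventually_elim (simp add: amsgrad_progress_def amsgrad_path.abs_inner_eta_mult_le
        amsgrad_path.abs_grad_nth_le amsgrad_path.abs_m_nth_le)
qed measurable

lemma integrable_decoupled_progress:
  assumes "t \<ge> 1"
  shows "integrable M (A t)"
proof (rule integrable_const_bound)
  show "AE \<omega> in M. norm (A t \<omega>) \<le> real CARD('d) * H\<^sup>2 / ell"
    using path_AE
  proof eventually_elim
    case (elim \<omega>)
    interpret path: amsgrad_path beta2 b1 x1 "\<lambda>s. g s \<omega>" f grad H c L
      by (rule elim)
    show ?case
      using path.abs_inner_eta_mult_le path.abs_grad_nth_le path.abs_gs_nth_le[OF assms]
      by (simp add: amsgrad_decoupled_progress_def)
  qed
qed measurable

lemma integrable_defect: "t \<ge> 1 \<Longrightarrow> integrable M (Err t)"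
  unfolding amsgrad_progress_defect_def using integrable_progress integrable_decoupled_progress by auto

lemma integrable_grad_sq: "integrable M (\<lambda>\<omega>. (norm (grad (X t \<omega>)))\<^sup>2)"
  using grad_bound H_pos
  by (intro integrable_const_bound[of _ "H\<^sup>2"]) (auto intro: power_mono)

lemma expectation_progress_recursion:
  assumes "t \<ge> 1"
  shows "b1 t * expectation (P (t - 1)) + (1 - b1 t) * expectation (A t) - expectation (\<lambda>\<omega>. \<bar>Err t \<omega>\<bar>)
    \<le> expectation (P t)"
proof -
  have "expectation (P t) = expectation (\<lambda>\<omega>. Err t \<omega> + b1 t * P (t - 1) \<omega> + (1 - b1 t) * A t \<omega>)"
    by (simp add: amsgrad_progress_defect_def)
  also have "\<dots> = expectation (Err t) + b1 t * expectation (P (t - 1)) + (1 - b1 t) * expectation (A t)"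
    using integrable_defect[OF assms] integrable_progress integrable_decoupled_progress[OF assms] by simp
  moreover have "\<bar>expectation (Err t)\<bar> \<le> expectation (\<lambda>\<omega>. \<bar>Err t \<omega>\<bar>)"
    using integral_norm_bound[of M "Err t"] by simp
  ultimately show ?thesis by linarith
qed

lemma sum_expectation_progress_le:
  "(\<Sum>t=1..T. expectation (P t)) \<le> f x1 - (INF x. f x) + \<bar>L\<bar> * (real CARD('d) * H / ell)\<^sup>2 * harm T"
proof -
  have "(\<Sum>t=1..T. expectation (P t)) = expectation (\<lambda>\<omega>. \<Sum>t=1..T. P t \<omega>)"
    using integrable_progress by (simp add: integral_sum)
  also have "\<dots> \<le> f x1 - (INF x. f x) + \<bar>L\<bar> * (real CARD('d) * H / ell)\<^sup>2 * harm T"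
  proof (rule integral_le_const)
    have "bdd_below (range f)"
      using minimum by (auto intro: bdd_belowI)
    then have f_ge: "(INF x. f x) \<le> f x" for x
      by (rule cINF_lower) simp
    show "AE \<omega> in M. (\<Sum>t=1..T. P t \<omega>) \<le> f x1 - (INF x. f x) + \<bar>L\<bar> * (real CARD('d) * H / ell)\<^sup>2 * harm T"
      using path_AE
    proof eventually_elim
      case (elim \<omega>)
      interpret path: amsgrad_path beta2 b1 x1 "\<lambda>s. g s \<omega>" f grad H c L
        by (rule elim)
      show ?case
        using path.sum_progress_le[of T] f_ge[of "X (Suc T) \<omega>"] by simp
    qed
  qed (use integrable_progress in auto)
  finally show ?thesis .
qed

lemma sum_expectation_abs_defect_le:
  assumes "T \<ge> 1"
  shows "(\<Sum>t=1..T. expectation (\<lambda>\<omega>. \<bar>Err t \<omega>\<bar>))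
    \<le> 2 * real CARD('d) * H\<^sup>2 / ell + \<bar>L\<bar> * (real CARD('d) * H / ell)\<^sup>2 * harm T"
proof -
  have "(\<Sum>t=1..T. expectation (\<lambda>\<omega>. \<bar>Err t \<omega>\<bar>)) = expectation (\<lambda>\<omega>. \<Sum>t=1..T. \<bar>Err t \<omega>\<bar>)"
    using integrable_defect by (simp add: integral_sum)
  also have "\<dots> \<le> 2 * real CARD('d) * H\<^sup>2 / ell + \<bar>L\<bar> * (real CARD('d) * H / ell)\<^sup>2 * harm T"
  proof (rule integral_le_const)
    show "AE \<omega> in M. (\<Sum>t=1..T. \<bar>Err t \<omega>\<bar>)
        \<le> 2 * real CARD('d) * H\<^sup>2 / ell + \<bar>L\<bar> * (real CARD('d) * H / ell)\<^sup>2 * harm T"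
      using path_AE by eventually_elim (rule amsgrad_path.sum_abs_defect_le[OF _ assms])
  qed (use integrable_defect in auto)
  finally show ?thesis .
qed

lemma integrable_noise_term:
  assumes "t \<ge> 1"
  shows "integrable M (\<lambda>\<omega>. (grad (X t \<omega>) $ i * eta (t - 1) \<omega> $ i) * zeta t \<omega> $ i)"
proof (rule integrable_const_bound)
  show "(\<lambda>\<omega>. (grad (X t \<omega>) $ i * eta (t - 1) \<omega> $ i) * zeta t \<omega> $ i) \<in> borel_measurable M"
    using assms by measurable
  show "AE \<omega> in M. norm ((grad (X t \<omega>) $ i * eta (t - 1) \<omega> $ i) * zeta t \<omega> $ i) \<le> H * (1 / ell) * (2 * H)"
    using path_AE AE_space
  proof eventually_elim
    case (elim \<omega>)
    interpret path: amsgrad_path beta2 b1 x1 "\<lambda>s. g s \<omega>" f grad H c L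
      by (rule elim(1))
    have "\<bar>grad (X t \<omega>) $ i\<bar> * eta (t - 1) \<omega> $ i \<le> H * (1 / ell)"
      using path.abs_grad_nth_le path.eta_nth_le_inverse_ell path.eta_nth_nonneg H_pos
      by (intro mult_mono) auto
    then have "\<bar>grad (X t \<omega>) $ i * eta (t - 1) \<omega> $ i\<bar> \<le> H * (1 / ell)"
      using path.eta_nth_nonneg by (simp add: abs_mult)
    moreover have "zeta t \<omega> $ i = g t \<omega> $ i - grad (X t \<omega>) $ i"
      using noise[OF assms elim(2)] by simp
    then have "\<bar>zeta t \<omega> $ i\<bar> \<le> 2 * H"
      using path.abs_gs_nth_le[OF assms, of i] path.abs_grad_nth_le[of "X t \<omega>" i] by linarith
    ultimately show ?case
      unfolding real_norm_def abs_mult[of _ "zeta t \<omega> $ i"]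
      using H_pos path.ell_pos by (intro mult_mono) auto
  qed
qed

lemma expectation_noise_term_eq_0:
  assumes "t \<ge> 1"
  shows "expectation (\<lambda>\<omega>. (grad (X t \<omega>) $ i * eta (t - 1) \<omega> $ i) * zeta t \<omega> $ i) = 0"
proof -
  interpret S: finite_measure_subalgebra M "past_sigma M g t"
    by unfold_locales (rule subalgebra_past_sigma[OF g_meas])
  show ?thesis
    using S.integral_mult_eq_0_if_real_cond_exp_eq_0[OF integrable_noise_term[OF assms]
        measurable_past_sigma_weight borel_measurable_zeta_nth[OF assms] noise_mean[OF assms]] .
qed

lemma decoupled_progress_eq:
  assumes "t \<ge> 1" "\<omega> \<in> space M"
  shows "A t \<omega> = grad (X t \<omega>) \<bullet> (eta (t - 1) \<omega> * grad (X t \<omega>))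
    + (\<Sum>i\<in>UNIV. (grad (X t \<omega>) $ i * eta (t - 1) \<omega> $ i) * zeta t \<omega> $ i)"
  using noise[OF assms]
  by (simp add: amsgrad_decoupled_progress_def inner_vec_def times_vec_def algebra_simps sum.distrib)

lemma expectation_grad_sq_le_decoupled_progress:
  assumes "t \<ge> 1"
  shows "expectation (\<lambda>\<omega>. (norm (grad (X t \<omega>)))\<^sup>2) / (sqrt (real (t - 1)) * H) \<le> expectation (A t)"
proof -
  define Q where "Q \<omega> = grad (X t \<omega>) \<bullet> (eta (t - 1) \<omega> * grad (X t \<omega>))" for \<omega>
  have "integrable M Q"
  proof (rule integrable_const_bound)
    show "Q \<in> borel_measurable M"
      unfolding Q_def times_vec_def by measurable
    show "AE \<omega> in M. norm (Q \<omega>) \<le> real CARD('d) * H\<^sup>2 / ell"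
      using path_AE
    proof eventually_elim
      case (elim \<omega>)
      interpret path: amsgrad_path beta2 b1 x1 "\<lambda>s. g s \<omega>" f grad H c L
        by (rule elim)
      show ?case
        unfolding Q_def using path.abs_inner_eta_mult_le path.abs_grad_nth_le by simp
    qed
  qed
  have "expectation (A t) = expectation (\<lambda>\<omega>. Q \<omega>
      + (\<Sum>i\<in>UNIV. (grad (X t \<omega>) $ i * eta (t - 1) \<omega> $ i) * zeta t \<omega> $ i))"
    unfolding Q_def using decoupled_progress_eq[OF assms] by (intro Bochner_Integration.integral_cong) auto
  also have "\<dots> = expectation Q"
    using \<open>integrable M Q\<close> integrable_noise_term[OF assms] expectation_noise_term_eq_0[OF assms]
    by (simp add: integral_sum)
  finally have A_eq: "expectation (A t) = expectation Q" .
  have "expectation (\<lambda>\<omega>. (norm (grad (X t \<omega>)))\<^sup>2 / (sqrt (real (t - 1)) * H)) \<le> expectation Q"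
  proof (rule integral_mono_AE)
    show "AE \<omega> in M. (norm (grad (X t \<omega>)))\<^sup>2 / (sqrt (real (t - 1)) * H) \<le> Q \<omega>"
      using path_AE
    proof eventually_elim
      case (elim \<omega>)
      interpret path: amsgrad_path beta2 b1 x1 "\<lambda>s. g s \<omega>" f grad H c L
        by (rule elim)
      show ?case
        unfolding Q_def by (rule path.norm_sq_div_le_inner_eta_mult)
    qed
  qed (use \<open>integrable M Q\<close> integrable_grad_sq in auto)
  then show ?thesis
    by (simp add: A_eq)
qed

lemma expectation_decoupled_progress_nonneg:
  assumes "t \<ge> 1"
  shows "0 \<le> expectation (A t)"
proof -
  have "0 \<le> expectation (\<lambda>\<omega>. (norm (grad (X t \<omega>)))\<^sup>2) / (sqrt (real (t - 1)) * H)"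
    using H_pos by simp
  then show ?thesis
    using expectation_grad_sq_le_decoupled_progress[OF assms] by linarith
qed

lemma expectation_grad_sq_div_sqrt_le:
  assumes "t \<ge> 1"
  shows "expectation (\<lambda>\<omega>. (norm (grad (X t \<omega>)))\<^sup>2) / sqrt (real t)
    \<le> H * expectation (A t) + (if t = 1 then H\<^sup>2 else 0)"
proof (cases "t = 1")
  case True
  have "expectation (\<lambda>\<omega>. (norm (grad (X t \<omega>)))\<^sup>2) \<le> H\<^sup>2"
    using integrable_grad_sq grad_bound H_pos by (intro integral_le_const) (auto intro: power_mono)
  moreover have "0 \<le> H * expectation (A t)"
    using expectation_decoupled_progress_nonneg[OF assms] H_pos by simp
  ultimately show ?thesis
    using True by simp
next
  case False
  define G where "G = expectation (\<lambda>\<omega>. (norm (grad (X t \<omega>)))\<^sup>2)"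
  have "G / sqrt (real t) \<le> G / sqrt (real (t - 1))"
    using False assms by (intro divide_left_mono) (auto simp: G_def)
  also have "\<dots> = H * (G / (sqrt (real (t - 1)) * H))"
    using H_pos by simp
  also have "\<dots> \<le> H * expectation (A t)"
    using expectation_grad_sq_le_decoupled_progress[OF assms] H_pos
    by (intro mult_left_mono) (auto simp: G_def)
  finally show ?thesis
    using False by (simp add: G_def)
qed

lemma sum_expectation_decoupled_progress_le:
  "(1 - beta1) * (\<Sum>t=1..T. expectation (A t))
    \<le> (\<Sum>t=1..T. expectation (P t)) + (\<Sum>t=1..T. expectation (\<lambda>\<omega>. \<bar>Err t \<omega>\<bar>)) / (1 - beta1)"
proof (rule sum_le_of_averaging_recursion[where b=b1])
  show "expectation (P 0) = 0"
    by (simp add: amsgrad_progress_def amsgrad_eta_def times_vec_def inner_vec_def)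
qed (use expectation_progress_recursion expectation_decoupled_progress_nonneg b1_range beta1 in auto)

lemma weighted_sum_expectation_grad_sq_le:
  "\<exists>Q1 Q2. \<forall>T::nat. T \<ge> 1 \<longrightarrow>
    (\<Sum>t=1..T. expectation (\<lambda>\<omega>. (norm (grad (X t \<omega>)))\<^sup>2) / sqrt (real t)) \<le> Q1 + Q2 * ln (real T)"
proof -
  define C where "C = \<bar>L\<bar> * (real CARD('d) * H / ell)\<^sup>2"
  define D where "D = 2 * real CARD('d) * H\<^sup>2 / ell"
  define F where "F = f x1 - (INF x. f x)"
  define \<gamma> where "\<gamma> = 1 / (1 - beta1)"
  define Q2 where "Q2 = H * C * (1 + \<gamma>) * \<gamma>"
  define Q1 where "Q1 = H\<^sup>2 + H * (F + D * \<gamma>) * \<gamma> + Q2"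
  have "(\<Sum>t=1..T. expectation (\<lambda>\<omega>. (norm (grad (X t \<omega>)))\<^sup>2) / sqrt (real t)) \<le> Q1 + Q2 * ln (real T)"
    if T: "T \<ge> 1" for T
  proof -
    have "(\<Sum>t=1..T. expectation (\<lambda>\<omega>. \<bar>Err t \<omega>\<bar>)) / (1 - beta1) \<le> (D + C * harm T) * \<gamma>"
      using sum_expectation_abs_defect_le[OF T] beta1
      by (simp add: C_def D_def \<gamma>_def divide_right_mono)
    then have "(1 - beta1) * (\<Sum>t=1..T. expectation (A t)) \<le> F + C * harm T + (D + C * harm T) * \<gamma>"
      using sum_expectation_decoupled_progress_le[of T] sum_expectation_progress_le[of T]
      by (simp add: C_def F_def)
    then have A_sum: "(\<Sum>t=1..T. expectation (A t)) \<le> (F + C * harm T + (D + C * harm T) * \<gamma>) * \<gamma>"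
      using beta1 by (simp add: \<gamma>_def pos_le_divide_eq mult.commute)
    have "(\<Sum>t=1..T. expectation (\<lambda>\<omega>. (norm (grad (X t \<omega>)))\<^sup>2) / sqrt (real t))
        \<le> (\<Sum>t=1..T. H * expectation (A t) + (if t = 1 then H\<^sup>2 else 0))"
      by (intro sum_mono expectation_grad_sq_div_sqrt_le) auto
    also have "\<dots> = H * (\<Sum>t=1..T. expectation (A t)) + H\<^sup>2"
      using T by (simp add: sum.distrib sum_distrib_left)
    also have "\<dots> \<le> H\<^sup>2 + H * (F + D * \<gamma>) * \<gamma> + Q2 * harm T"
      using mult_left_mono[OF A_sum, of H] H_pos by (simp add: Q2_def algebra_simps)
    also have "\<dots> \<le> Q1 + Q2 * ln (real T)"
    proof -
      have "0 \<le> Q2"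
        using H_pos beta1 by (simp add: Q2_def C_def \<gamma>_def)
      then have "Q2 * harm T \<le> Q2 * (1 + ln (real T))"
        by (intro mult_left_mono harm_le_1_plus_ln[OF T])
      then show ?thesis
        by (simp add: Q1_def algebra_simps)
    qed
    finally show ?thesis .
  qed
  then show ?thesis by blast
qed

end

theorem corollary1:
  fixes M :: "'w measure"
    and f :: "real^'d \<Rightarrow> real" and grad :: "real^'d \<Rightarrow> real^'d"
    and g zeta :: "nat \<Rightarrow> 'w \<Rightarrow> real^'d"
    and L H c beta1 beta2 :: real and b1 :: "nat \<Rightarrow> real" and x1 :: "real^'d"
  assumes prob: "prob_space M"
    and grad: "\<And>x. GDERIV f x :> grad x"
    and lip: "\<And>x y. norm (grad x - grad y) \<le> L * norm (x - y)"
    and minimum: "\<exists>xs. \<forall>x. f xs \<le> f x"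
    and grad_bound: "\<And>x. norm (grad x) \<le> H"
    and g_meas: "\<And>t. g t \<in> borel_measurable M"
    and g_bound: "\<And>t. t \<ge> 1 \<Longrightarrow> AE \<omega> in M. norm (g t \<omega>) \<le> H"
    and noise: "\<And>t \<omega>. t \<ge> 1 \<Longrightarrow> \<omega> \<in> space M \<Longrightarrow>
        g t \<omega> = grad (amsgrad_x beta2 b1 x1 (\<lambda>s. g s \<omega>) t) + zeta t \<omega>"
    and noise_mean: "\<And>t i. t \<ge> 1 \<Longrightarrow>
        AE \<omega> in M. real_cond_exp M (past_sigma M g t) (\<lambda>\<omega>. zeta t \<omega> $ i) \<omega> = 0"
    and beta2: "0 \<le> beta2" "beta2 < 1"
    and beta1: "0 \<le> beta1" "beta1 < 1"
    and b1_range: "\<And>t. t \<ge> 1 \<Longrightarrow> 0 \<le> b1 t \<and> b1 t \<le> beta1"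
    and b1_noninc: "\<And>t. t \<ge> 1 \<Longrightarrow> b1 (Suc t) \<le> b1 t"
    and c_pos: "c > 0"
    and g1_lower: "AE \<omega> in M. \<forall>i. \<bar>g 1 \<omega> $ i\<bar> \<ge> c"
  shows "\<exists>Q1 Q2. \<forall>T::nat. T \<ge> 1 \<longrightarrow>
     Min ((\<lambda>t. \<integral>\<omega>. (norm (grad (amsgrad_x beta2 b1 x1 (\<lambda>s. g s \<omega>) t)))^2 \<partial>M) ` {1..T})
       \<le> (Q1 + Q2 * ln (real T)) / sqrt (real T)"
proof -
  interpret amsgrad_stochastic M f grad g zeta L H c beta1 beta2 b1 x1
    by (rule amsgrad_stochastic.intro[OF prob], unfold_locales) (use assms in auto)
  obtain Q1 Q2 where Q: "\<And>T::nat. T \<ge> 1 \<Longrightarrow>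
      (\<Sum>t=1..T. (\<integral>\<omega>. (norm (grad (X t \<omega>)))\<^sup>2 \<partial>M) / sqrt (real t)) \<le> Q1 + Q2 * ln (real T)"
    using weighted_sum_expectation_grad_sq_le by blast
  show ?thesis
    using Min_le_of_weighted_sum_le[OF _ _ Q] by (intro exI allI impI) auto
qed

end
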